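(* Let $N\ge 2$ and consider the cross gadget of size $N$ in the Clos network $C_{N,N}$, i.e. the set of flows consisting of one flow from source server $s_i^j$ (of input switch $I_i$) to destination server $t_j^i$ (of output switch $O_j$) with demand $1$, for each $i\in[N]$ and $j\in[N-1]$. Then every routing of this set with congestion $1$ satisfies: (1) for all $i\in[N]$, the $N-1$ flows leaving $I_i$ are assigned to $N-1$ different middle switches, and for all $j\in[N-1]$, the $N$ flows entering $O_j$ are assigned to $N$ different middle switches; (2) for all $i_1\neq i_2$ in $[N]$, the middle switch to which no flow leaving $I_{i_1}$ is assigned differs from the middle switch to which no flow leaving $I_{i_2}$ is assigned.
   Context: Clos network $C_{N,R}$: a directed graph with $N$ middle switches $M_1,\dots,M_N$, $R$ input switches $I_1,\dots,I_R$, $R$ output switches $O_1,\dots,O_R$, source servers $s_i^k$ attached to $I_i$ and destination servers $t_i^k$ attached to $O_i$ ($i\in[R]$, $k\in[N]$), with edges $s_i^kI_i$, $I_iM_m$, $M_mO_i$, $O_it_i^k$; all links have capacity $1$. A routing assigns each flow $f$ (from $I_{i(f)}$ to $O_{j(f)}$, demand $\mathrm{dem}(f)$) a single middle switch $r(f)\in[N]$; its congestion is $\max_{i\in[R],m\in[N]}\max\{\sum_{f:i(f)=i,r(f)=m}\mathrm{dem}(f),\ \sum_{f:j(f)=i,r(f)=m}\mathrm{dem}(f)\}$. *)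

theory Defs
  imports Complex_Main
begin

text \<open>A set of flows F in the Clos network C_{N,R}: each flow f goes from input switch
  I_(src f) to output switch O_(dst f), with demand dem f. Switch indices are 1-based.
  A routing assigns each flow a middle switch r f in {1..N}.\<close>

definition is_routing :: "nat \<Rightarrow> 'f set \<Rightarrow> ('f \<Rightarrow> nat) \<Rightarrow> bool" where
  "is_routing N F r \<longleftrightarrow> (\<forall>f\<in>F. r f \<in> {1..N})"

definition congestion ::
  "nat \<Rightarrow> nat \<Rightarrow> 'f set \<Rightarrow> ('f \<Rightarrow> nat) \<Rightarrow> ('f \<Rightarrow> nat) \<Rightarrow> ('f \<Rightarrow> real) \<Rightarrow> ('f \<Rightarrow> nat) \<Rightarrow> real"
  where
  "congestion N R F src dst dem r =
     Max ((\<lambda>(i, m). max (\<Sum>f\<in>{f\<in>F. src f = i \<and> r f = m}. dem f)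
                          (\<Sum>f\<in>{f\<in>F. dst f = i \<and> r f = m}. dem f)) ` ({1..R} \<times> {1..N}))"

definition cross_flows :: "nat \<Rightarrow> (nat \<times> nat) set" where
  "cross_flows N = {1..N} \<times> {1..N-1}"

definition cross_src :: "nat \<times> nat \<Rightarrow> nat" where "cross_src f = fst f"
definition cross_dst :: "nat \<times> nat \<Rightarrow> nat" where "cross_dst f = snd f"
definition cross_dem :: "nat \<times> nat \<Rightarrow> real" where "cross_dem f = 1"

end

theory Submission
  imports Defs
begin

text \<open>With congestion 1 every middle switch carries at most one flow out of each input switch
  and into each output switch, so the routing is injective along rows and columns of the
  N \<times> (N-1) gadget. Each column is then a bijection onto the N middle switches, so a fixed
  middle switch m is used by exactly N-1 flows, one per column and at most one per row:
  exactly one row misses m, and distinct rows miss distinct middle switches.\<close>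

lemma load_le_congestion:
  assumes "i \<in> {1..R}" "m \<in> {1..N}"
  shows "(\<Sum>f\<in>{f\<in>F. src f = i \<and> r f = m}. dem f) \<le> congestion N R F src dst dem r"
    and "(\<Sum>f\<in>{f\<in>F. dst f = i \<and> r f = m}. dem f) \<le> congestion N R F src dst dem r"
proof -
  let ?load = "\<lambda>(i, m). max (\<Sum>f\<in>{f\<in>F. src f = i \<and> r f = m}. dem f)
                              (\<Sum>f\<in>{f\<in>F. dst f = i \<and> r f = m}. dem f)"
  have "?load (i, m) \<le> congestion N R F src dst dem r"
    unfolding congestion_def by (rule Max_ge) (use assms in auto)
  then show "(\<Sum>f\<in>{f\<in>F. src f = i \<and> r f = m}. dem f) \<le> congestion N R F src dst dem r"
    and "(\<Sum>f\<in>{f\<in>F. dst f = i \<and> r f = m}. dem f) \<le> congestion N R F src dst dem r"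
    by simp_all
qed

lemma inj_on_if_card_fibres_le_1:
  assumes "finite A" "\<And>x. x \<in> A \<Longrightarrow> card {y\<in>A. f y = f x} \<le> 1"
  shows "inj_on f A"
proof (rule inj_onI)
  fix x y assume "x \<in> A" "y \<in> A" "f x = f y"
  then show "x = y"
    using assms card_le_Suc0_iff_eq[of "{z\<in>A. f z = f x}"] by auto
qed

lemma cross_routing_range:
  assumes "is_routing N (cross_flows N) r" "i \<in> {1..N}" "j \<in> {1..N-1}"
  shows "r (i, j) \<in> {1..N}"
  using assms unfolding is_routing_def cross_flows_def by blast

lemma cross_row_inj:
  assumes "is_routing N (cross_flows N) r"
    and "congestion N N (cross_flows N) cross_src cross_dst cross_dem r \<le> 1"
    and "i \<in> {1..N}"
  shows "inj_on (\<lambda>j. r (i, j)) {1..N-1}"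
proof (rule inj_on_if_card_fibres_le_1)
  fix j assume j: "j \<in> {1..N-1}"
  let ?m = "r (i, j)"
  have "?m \<in> {1..N}"
    using cross_routing_range[OF assms(1,3) j] .
  have "{f\<in>cross_flows N. cross_src f = i \<and> r f = ?m} = {i} \<times> {j'\<in>{1..N-1}. r (i, j') = ?m}"
    using assms(3) unfolding cross_flows_def cross_src_def by auto
  then show "card {j'\<in>{1..N-1}. r (i, j') = ?m} \<le> 1"
    using load_le_congestion(1)[OF assms(3) \<open>?m \<in> {1..N}\<close>, where F="cross_flows N" and src=cross_src
        and dst=cross_dst and dem=cross_dem and r=r] assms(2)
    by (simp add: cross_dem_def card_cartesian_product_singleton)
qed simp

lemma cross_column_inj:
  assumes "is_routing N (cross_flows N) r"
    and "congestion N N (cross_flows N) cross_src cross_dst cross_dem r \<le> 1"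
    and "j \<in> {1..N-1}"
  shows "inj_on (\<lambda>i. r (i, j)) {1..N}"
proof (rule inj_on_if_card_fibres_le_1)
  fix i assume i: "i \<in> {1..N}"
  let ?m = "r (i, j)"
  have "?m \<in> {1..N}"
    using cross_routing_range[OF assms(1) i assms(3)] .
  have "j \<in> {1..N}"
    using assms(3) by auto
  have "{f\<in>cross_flows N. cross_dst f = j \<and> r f = ?m} = {i'\<in>{1..N}. r (i', j) = ?m} \<times> {j}"
    using assms(3) unfolding cross_flows_def cross_dst_def by auto
  then show "card {i'\<in>{1..N}. r (i', j) = ?m} \<le> 1"
    using load_le_congestion(2)[OF \<open>j \<in> {1..N}\<close> \<open>?m \<in> {1..N}\<close>, where F="cross_flows N" and src=cross_src
        and dst=cross_dst and dem=cross_dem and r=r] assms(2)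
    by (simp add: cross_dem_def card_cartesian_product)
qed simp

lemma card_rows_missing_value:
  fixes r :: "'a \<times> 'b \<Rightarrow> 'c"
  assumes fin: "finite A" "finite C"
    and card_eq: "card C = card A"
    and into: "\<And>a b. a \<in> A \<Longrightarrow> b \<in> B \<Longrightarrow> r (a, b) \<in> C"
    and row_inj: "\<And>a. a \<in> A \<Longrightarrow> inj_on (\<lambda>b. r (a, b)) B"
    and column_inj: "\<And>b. b \<in> B \<Longrightarrow> inj_on (\<lambda>a. r (a, b)) A"
    and "m \<in> C"
  shows "card {a\<in>A. m \<notin> (\<lambda>b. r (a, b)) ` B} = card A - card B"
proof -
  define S where "S = {(a, b)\<in>A \<times> B. r (a, b) = m}"
  have column_onto: "(\<lambda>a. r (a, b)) ` A = C" if "b \<in> B" for b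
    using column_inj[OF that] into[OF _ that] fin card_eq
    by (intro card_subset_eq) (auto simp: card_image)
  have "snd ` S = B"
  proof
    show "B \<subseteq> snd ` S"
    proof
      fix b assume "b \<in> B"
      then obtain a where "a \<in> A" "r (a, b) = m"
        using column_onto[OF \<open>b \<in> B\<close>] \<open>m \<in> C\<close> by blast
      then have "(a, b) \<in> S"
        using \<open>b \<in> B\<close> unfolding S_def by simp
      then show "b \<in> snd ` S"
        by (metis image_eqI snd_conv)
    qed
  qed (auto simp: S_def)
  moreover have "inj_on snd S"
    using column_inj unfolding S_def inj_on_def by auto
  ultimately have "card S = card B"
    by (metis card_image)
  moreover have "inj_on fst S"
    using row_inj unfolding S_def inj_on_def by auto
  moreover have "fst ` S = {a\<in>A. m \<in> (\<lambda>b. r (a, b)) ` B}"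
    unfolding S_def by force
  ultimately have "card {a\<in>A. m \<in> (\<lambda>b. r (a, b)) ` B} = card B"
    by (metis card_image)
  moreover have "{a\<in>A. m \<notin> (\<lambda>b. r (a, b)) ` B} = A - {a\<in>A. m \<in> (\<lambda>b. r (a, b)) ` B}"
    by blast
  ultimately show ?thesis
    using fin by (simp add: card_Diff_subset)
qed

theorem mainTheorem8:
  fixes N :: nat and r :: "nat \<times> nat \<Rightarrow> nat"
  assumes "N \<ge> 2"
    and "is_routing N (cross_flows N) r"
    and "congestion N N (cross_flows N) cross_src cross_dst cross_dem r = 1"
  shows "(\<forall>i\<in>{1..N}. inj_on (\<lambda>j. r (i, j)) {1..N-1})
       \<and> (\<forall>j\<in>{1..N-1}. inj_on (\<lambda>i. r (i, j)) {1..N})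
       \<and> (\<forall>i1\<in>{1..N}. \<forall>i2\<in>{1..N}. i1 \<noteq> i2 \<longrightarrow>
            (\<forall>m1\<in>{1..N}. \<forall>m2\<in>{1..N}.
               m1 \<notin> (\<lambda>j. r (i1, j)) ` {1..N-1} \<longrightarrow>
               m2 \<notin> (\<lambda>j. r (i2, j)) ` {1..N-1} \<longrightarrow> m1 \<noteq> m2))"
proof -
  have congestion_le: "congestion N N (cross_flows N) cross_src cross_dst cross_dem r \<le> 1"
    using assms(3) by simp
  note rows_inj = cross_row_inj[OF assms(2) congestion_le]
  note columns_inj = cross_column_inj[OF assms(2) congestion_le]
  have missing_rows_card: "card {i\<in>{1..N}. m \<notin> (\<lambda>j. r (i, j)) ` {1..N-1}} = N - (N - 1)"
    if "m \<in> {1..N}" for m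
    using card_rows_missing_value[OF _ _ _ cross_routing_range[OF assms(2)] rows_inj columns_inj that]
    by simp
  have unique_missing_row: "i1 = i2"
    if "i1 \<in> {1..N}" "i2 \<in> {1..N}" "m \<in> {1..N}"
      and "m \<notin> (\<lambda>j. r (i1, j)) ` {1..N-1}" "m \<notin> (\<lambda>j. r (i2, j)) ` {1..N-1}" for i1 i2 m
    using that missing_rows_card[OF \<open>m \<in> {1..N}\<close>]
      card_le_Suc0_iff_eq[of "{i\<in>{1..N}. m \<notin> (\<lambda>j. r (i, j)) ` {1..N-1}}"] by auto
  show ?thesis
    using rows_inj columns_inj unique_missing_row by blast
qed

end
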